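(* Let $r>0$, $r\neq1$, and let $x=p/q\in(0,1)$ be a fixed rational number in lowest terms. For $N$ ranging over positive multiples of $q$ (so that $Nx$ is an integer), let $t_{Nx}$ be the mean absorption time of the Moran process with frequency-independent fitnesses and population size $N$ started from state $Nx$. Then, as $N\to\infty$ through multiples of $q$: If $r>1$, $$t_{Nx}=\frac{r}{r-1}N\log N+\frac{r}{r-1}N\Big(\gamma+\log(1-\tfrac1r)+\log(1-x)-\tfrac1r\log x\Big)+\frac{r+1}{2(r-1)^2}\Big(\frac{r}{1-x}+\frac1x-1\Big)+O\Big(\frac1N\Big).$$ If $0<r<1$, $$t_{Nx}=\frac{1}{1-r}N\log N+\frac{1}{1-r}N\Big(\gamma+\log(1-r)+\log x-r\log(1-x)\Big)+\frac{r(1+r)}{2(1-r)^2}\Big(\frac{1}{rx}+\frac{1}{1-x}-1\Big)+O\Big(\frac1N\Big).$$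
   Context: Moran process with frequency-independent fitnesses: fix an integer $N\ge 2$ and $r>0$ (relative fitness of type A; type B has fitness 1). This is the discrete-time Markov chain $(X_n)$ on $\{0,1,\dots,N\}$ with $0$ and $N$ absorbing and, for $1\le i\le N-1$, $P(i\to i+1)=\alpha_i=\frac{i(N-i)r}{N(ir+N-i)}$, $P(i\to i-1)=\beta_i=\frac{i(N-i)}{N(ir+N-i)}$, $P(i\to i)=1-\alpha_i-\beta_i$. With $T=\inf\{n: X_n\in\{0,N\}\}$, the mean absorption time from state $i$ is $t_i=E_i[T]$. $\gamma$ is the Euler–Mascheroni constant; implied constants in $O(\cdot)$ may depend on $r$ and $x$. *)

theory Defs
  imports "HOL-Analysis.Analysis" "HOL-Probability.Probability"
begin

text \<open>Moran process with frequency-independent fitnesses, population size N,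
  relative fitness r of type A.  Transition probabilities from an interior state i.\<close>

definition moran_alpha :: "nat \<Rightarrow> real \<Rightarrow> nat \<Rightarrow> real" where
  "moran_alpha N r i = real i * real (N - i) * r / (real N * (real i * r + real (N - i)))"

definition moran_beta :: "nat \<Rightarrow> real \<Rightarrow> nat \<Rightarrow> real" where
  "moran_beta N r i = real i * real (N - i) / (real N * (real i * r + real (N - i)))"

definition moran_step :: "nat \<Rightarrow> real \<Rightarrow> nat \<Rightarrow> nat pmf" where
  "moran_step N r i =
     (if i = 0 \<or> N \<le> i then return_pmf i
      else embed_pmf (\<lambda>j. if j = i + 1 then moran_alpha N r i
                          else if j = i - 1 then moran_beta N r i
                          else if j = i then 1 - moran_alpha N r i - moran_beta N r i
                          else 0))"

fun moran_dist :: "nat \<Rightarrow> real \<Rightarrow> nat \<Rightarrow> nat \<Rightarrow> nat pmf" where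
  "moran_dist N r i 0 = return_pmf i"
| "moran_dist N r i (Suc n) = bind_pmf (moran_dist N r i n) (moran_step N r)"

text \<open>Mean absorption time t_i = E_i[T] = \<Sum>_{n\<ge>0} P_i(T > n); since 0 and N are
  absorbing, T > n iff X_n \<in> {1,...,N-1}.\<close>
definition moran_time :: "nat \<Rightarrow> real \<Rightarrow> nat \<Rightarrow> real" where
  "moran_time N r i = (\<Sum>n. measure_pmf.prob (moran_dist N r i n) {1..<N})"

end

(*
  First-step analysis: the mean absorption time is the unique solution of
  t i = 1 + alpha_i t (i + 1) + beta_i t (i - 1) + (1 - alpha_i - beta_i) t i with t 0 = t N = 0;
  uniqueness holds because the expectation of t (X_n) drops by P(T > n) in every step.
  Since alpha_i = r beta_i, the increments d_i = t (i + 1) - t i satisfy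
  d_i = d_(i-1) / r - 1 / alpha_i, and 1 / alpha_j = N / (N - j) + N / (r j), so t is an
  explicit combination of harmonic numbers, a partial logarithmic series and the weighted
  geometric sums sum_m rho^m / (a + m) and sum_m rho^m / (b - m), where rho = 1 / r.
  For r > 1 and i = N x these have expansions with errors O(1 / N^2), resp. exponentially
  small, which gives the expansion of t up to O(1 / N).  The case r < 1 reduces to r > 1
  through the symmetry (r, i) -> (1 / r, N - i), which exchanges alpha and beta.
*)
theory Submission
  imports Defs "HOL-Real_Asymp.Real_Asymp"
begin

section \<open>First-step analysis\<close>

lemma moran_alpha_eq_mult_beta: "moran_alpha N r i = r * moran_beta N r i"
  by (simp add: moran_alpha_def moran_beta_def)

lemma moran_beta_nonneg: "r \<ge> 0 \<Longrightarrow> moran_beta N r i \<ge> 0"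
  by (simp add: moran_beta_def)

lemma moran_alpha_nonneg: "r \<ge> 0 \<Longrightarrow> moran_alpha N r i \<ge> 0"
  by (simp add: moran_alpha_eq_mult_beta moran_beta_nonneg)

lemma moran_alpha_plus_beta_le_1:
  assumes "r > 0" "i < N"
  shows "moran_alpha N r i + moran_beta N r i \<le> 1"
proof -
  define a b where "a = real i" and "b = real (N - i)"
  have ab: "a \<ge> 0" "b > 0" "real N = a + b" using assms by (auto simp: a_def b_def)
  have "(a + b) * (a * r + b) = a * b * (r + 1) + (a * a * r + b * b)"
    by (simp add: algebra_simps)
  moreover have "a * a * r + b * b \<ge> 0" using ab assms by simp
  moreover have "(a + b) * (a * r + b) > 0" using ab assms by (simp add: add_nonneg_pos)
  ultimately have "a * b * (r + 1) / ((a + b) * (a * r + b)) \<le> 1" by simp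
  thus ?thesis
    unfolding moran_alpha_def moran_beta_def ab(3) a_def[symmetric] b_def[symmetric]
    by (simp add: add_divide_distrib[symmetric] algebra_simps)
qed

lemma pmf_moran_step:
  assumes "r > 0" "0 < i" "i < N"
  shows "pmf (moran_step N r i) j =
    (if j = i + 1 then moran_alpha N r i else if j = i - 1 then moran_beta N r i
     else if j = i then 1 - moran_alpha N r i - moran_beta N r i else 0)"
    (is "_ = ?p j")
proof -
  have nonneg: "?p j \<ge> 0" for j
    using moran_alpha_nonneg[of r N i] moran_beta_nonneg[of r N i]
      moran_alpha_plus_beta_le_1[of r i N] assms
    by auto
  have "(\<integral>\<^sup>+ j. ennreal (?p j) \<partial>count_space UNIV) = (\<Sum>j\<in>{i - 1, i, i + 1}. ennreal (?p j))"
    by (rule nn_integral_count_space') auto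
  also have "\<dots> = ennreal (\<Sum>j\<in>{i - 1, i, i + 1}. ?p j)"
    using nonneg by (simp add: sum_ennreal)
  also have "(\<Sum>j\<in>{i - 1, i, i + 1}. ?p j) = 1"
    using assms by (cases i) auto
  finally have "pmf (embed_pmf ?p) j = ?p j"
    using nonneg by (intro pmf_embed_pmf) auto
  thus ?thesis using assms unfolding moran_step_def by simp
qed

lemma set_pmf_moran_step:
  assumes "r > 0" "i \<le> N"
  shows "set_pmf (moran_step N r i) \<subseteq> {..N}"
proof (cases "0 < i \<and> i < N")
  case True
  thus ?thesis using assms by (auto simp: set_pmf_iff pmf_moran_step split: if_splits)
qed (use assms in \<open>auto simp: moran_step_def\<close>)

lemma sum_pmf_moran_step:
  assumes "r > 0" "i \<le> N"
  shows "(\<Sum>j\<le>N. pmf (moran_step N r i) j * f j) =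
    (if 0 < i \<and> i < N then moran_alpha N r i * f (i + 1) + moran_beta N r i * f (i - 1)
       + (1 - moran_alpha N r i - moran_beta N r i) * f i else f i)"
proof (cases "0 < i \<and> i < N")
  case True
  have "(\<Sum>j\<le>N. pmf (moran_step N r i) j * f j) =
      (\<Sum>j\<in>{i - 1, i, i + 1}. pmf (moran_step N r i) j * f j)"
    using True assms by (intro sum.mono_neutral_right) (auto simp: pmf_moran_step)
  thus ?thesis using True assms by (cases i) (auto simp: pmf_moran_step)
next
  case False
  hence "moran_step N r i = return_pmf i" using assms by (auto simp: moran_step_def)
  thus ?thesis using False assms by (auto simp: indicator_def)
qed

lemma set_pmf_moran_dist:
  assumes "r > 0" "i \<le> N"
  shows "set_pmf (moran_dist N r i n) \<subseteq> {..N}"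
proof (induction n)
  case (Suc n)
  thus ?case using set_pmf_moran_step[OF assms(1)] by (auto simp: set_bind_pmf)
qed (use assms in simp)

lemma pmf_moran_dist_Suc:
  assumes "r > 0" "i \<le> N"
  shows "pmf (moran_dist N r i (Suc n)) j =
    (\<Sum>l\<le>N. pmf (moran_dist N r i n) l * pmf (moran_step N r l) j)"
proof -
  have "pmf (moran_dist N r i (Suc n)) j =
      measure_pmf.expectation (moran_dist N r i n) (\<lambda>l. pmf (moran_step N r l) j)"
    by (simp add: pmf_bind)
  also have "\<dots> = (\<Sum>l\<le>N. pmf (moran_dist N r i n) l * pmf (moran_step N r l) j)"
    using set_pmf_moran_dist[OF assms]
    by (subst integral_measure_pmf_real) (auto simp: mult.commute)
  finally show ?thesis .
qed

lemma moran_potential_Suc: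
  assumes "r > 0" "i \<le> N"
    and rec: "\<And>j. 0 < j \<Longrightarrow> j < N \<Longrightarrow> f j = 1 + moran_alpha N r j * f (j + 1)
           + moran_beta N r j * f (j - 1) + (1 - moran_alpha N r j - moran_beta N r j) * f j"
  shows "(\<Sum>j\<le>N. pmf (moran_dist N r i (Suc n)) j * f j) =
    (\<Sum>j\<le>N. pmf (moran_dist N r i n) j * f j) - measure_pmf.prob (moran_dist N r i n) {1..<N}"
proof -
  let ?P = "pmf (moran_dist N r i n)"
  have "(\<Sum>j\<le>N. pmf (moran_dist N r i (Suc n)) j * f j) =
      (\<Sum>j\<le>N. \<Sum>l\<le>N. ?P l * (pmf (moran_step N r l) j * f j))"
    unfolding pmf_moran_dist_Suc[OF assms(1,2)] by (simp add: sum_distrib_right mult.assoc)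
  also have "\<dots> = (\<Sum>l\<le>N. ?P l * (\<Sum>j\<le>N. pmf (moran_step N r l) j * f j))"
    by (subst sum.swap) (simp add: sum_distrib_left)
  also have "\<dots> = (\<Sum>l\<le>N. ?P l * f l - (if l \<in> {1..<N} then ?P l else 0))"
  proof (intro sum.cong refl)
    fix l assume "l \<in> {..N}"
    hence "(\<Sum>j\<le>N. pmf (moran_step N r l) j * f j) = f l - (if l \<in> {1..<N} then 1 else 0)"
      using rec[of l] sum_pmf_moran_step[OF assms(1), of l N f] by auto
    thus "?P l * (\<Sum>j\<le>N. pmf (moran_step N r l) j * f j) =
        ?P l * f l - (if l \<in> {1..<N} then ?P l else 0)"
      by (simp add: right_diff_distrib)
  qed
  also have "\<dots> = (\<Sum>l\<le>N. ?P l * f l) - (\<Sum>l\<in>{1..<N}. ?P l)"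
    by (simp add: sum_subtractf sum.If_cases) (intro sum.cong; auto)
  finally show ?thesis by (simp add: measure_measure_pmf_finite)
qed

lemma moran_time_eqI:
  assumes "r > 0" "i \<le> N" "f 0 = 0" "f N = 0"
    and rec: "\<And>j. 0 < j \<Longrightarrow> j < N \<Longrightarrow> f j = 1 + moran_alpha N r j * f (j + 1)
           + moran_beta N r j * f (j - 1) + (1 - moran_alpha N r j - moran_beta N r j) * f j"
  shows "moran_time N r i = f i"
proof -
  define E where "E n = (\<Sum>j\<le>N. pmf (moran_dist N r i n) j * f j)" for n
  define u where "u n = measure_pmf.prob (moran_dist N r i n) {1..<N}" for n
  define B where "B = (\<Sum>j\<le>N. \<bar>f j\<bar>)"
  have partial_sums: "(\<Sum>n<M. u n) = f i - E M" for M
  proof (induction M)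
    case 0
    show ?case using assms(2) by (simp add: E_def indicator_def)
  next
    case (Suc M)
    thus ?case using moran_potential_Suc[OF assms(1,2) rec, of M] by (simp add: E_def u_def)
  qed
  have E_bound: "\<bar>E n\<bar> \<le> B * u n" for n
  proof -
    let ?P = "pmf (moran_dist N r i n)"
    have "{..N} - {1..<N} \<subseteq> {0, N}" by auto
    hence "E n = (\<Sum>j\<in>{1..<N}. ?P j * f j)"
      unfolding E_def using assms(3,4) by (intro sum.mono_neutral_right) auto
    also have "\<bar>\<dots>\<bar> \<le> (\<Sum>j\<in>{1..<N}. ?P j * B)"
      unfolding B_def
    proof (rule order.trans[OF sum_abs], intro sum_mono)
      fix j assume "j \<in> {1..<N}"
      hence "\<bar>f j\<bar> \<le> (\<Sum>l\<le>N. \<bar>f l\<bar>)" by (intro member_le_sum) auto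
      thus "\<bar>?P j * f j\<bar> \<le> ?P j * (\<Sum>l\<le>N. \<bar>f l\<bar>)" by (simp add: abs_mult mult_left_mono)
    qed
    finally show ?thesis
      by (simp add: u_def measure_measure_pmf_finite sum_distrib_left mult.commute)
  qed
  have u_nonneg: "u n \<ge> 0" for n by (simp add: u_def)
  have "(\<Sum>n<M. u n) \<le> f i + B" for M
  proof -
    have "B * u M \<le> B"
      unfolding u_def B_def by (intro mult_left_le sum_nonneg) auto
    thus ?thesis using E_bound[of M] partial_sums[of M] by linarith
  qed
  hence "summable u" using u_nonneg by (intro summableI_nonneg_bounded)
  hence "(\<lambda>n. B * u n) \<longlonglongrightarrow> 0" by (intro tendsto_mult_right_zero summable_LIMSEQ_zero)
  moreover have "\<forall>n. norm (E n) \<le> B * u n" using E_bound by simp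
  ultimately have "E \<longlonglongrightarrow> 0"
    using Lim_null_comparison[where f = E and g = "\<lambda>n. B * u n", OF always_eventually] by blast
  hence "(\<lambda>M. \<Sum>n<M. u n) \<longlonglongrightarrow> f i - 0" unfolding partial_sums by (intro tendsto_diff tendsto_const)
  hence "u sums f i" by (simp add: sums_def)
  thus ?thesis unfolding moran_time_def u_def[symmetric] by (simp add: sums_iff)
qed

section \<open>Solving the first-step equations\<close>

definition moran_weight :: "nat \<Rightarrow> real \<Rightarrow> nat \<Rightarrow> real" where
  "moran_weight N r j = real N / real (N - j) + real N / (r * real j)"

lemma moran_alpha_mult_weight:
  assumes "r > 0" "0 < j" "j < N"
  shows "moran_alpha N r j * moran_weight N r j = 1"
proof -
  define a b where "a = real j" and "b = real (N - j)"
  have pos: "a > 0" "b > 0" "a * r + b > 0" and N: "real N = a + b"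
    using assms by (auto simp: a_def b_def add_pos_pos)
  have "moran_weight N r j = (a + b) * (a * r + b) / (a * b * r)"
    unfolding moran_weight_def N a_def[symmetric] b_def[symmetric]
    using pos assms(1) by (simp add: field_simps)
  moreover have "moran_alpha N r j = a * b * r / ((a + b) * (a * r + b))"
    unfolding moran_alpha_def N a_def[symmetric] b_def[symmetric] by simp
  ultimately show ?thesis using pos assms(1) by simp
qed

(* The increments d m = t (m + 1) - t m of a solution t of the first-step equations satisfy
   d m = d (m - 1) / r - moran_weight N r m, hence d m = \<kappa> (1 / r) ^ m - moran_D N r m;
   the slope \<kappa> in moran_T is fixed by moran_T N r N = 0. *)
definition moran_D :: "nat \<Rightarrow> real \<Rightarrow> nat \<Rightarrow> real" where
  "moran_D N r i = (\<Sum>j=1..i. moran_weight N r j * (1 / r) ^ (i - j))"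

lemma moran_D_Suc: "moran_D N r (Suc i) = moran_weight N r (Suc i) + moran_D N r i / r"
proof -
  have "(\<Sum>j=1..i. moran_weight N r j * (1 / r) ^ (Suc i - j)) = moran_D N r i / r"
    unfolding moran_D_def sum_divide_distrib by (intro sum.cong) (auto simp: Suc_diff_le)
  thus ?thesis by (simp add: moran_D_def add.commute)
qed

definition moran_T :: "nat \<Rightarrow> real \<Rightarrow> nat \<Rightarrow> real" where
  "moran_T N r i =
     (\<Sum>m<i. (\<Sum>l<N. moran_D N r l) / (\<Sum>l<N. (1 / r) ^ l) * (1 / r) ^ m - moran_D N r m)"

lemma moran_T_0 [simp]: "moran_T N r 0 = 0"
  by (simp add: moran_T_def)

lemma moran_T_N:
  assumes "r > 0"
  shows "moran_T N r N = 0"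
proof (cases "N = 0")
  case False
  hence "(\<Sum>l<N. (1 / r) ^ l) \<noteq> 0"
    using assms by (intro sum_pos[THEN less_imp_neq, symmetric]) auto
  thus ?thesis
    by (simp add: moran_T_def sum_subtractf mult.commute
        flip: sum_distrib_left sum_distrib_right sum_divide_distrib)
qed simp

lemma moran_T_recurrence:
  assumes "r > 0" "0 < i" "i < N"
  shows "moran_T N r i = 1 + moran_alpha N r i * moran_T N r (i + 1)
    + moran_beta N r i * moran_T N r (i - 1)
    + (1 - moran_alpha N r i - moran_beta N r i) * moran_T N r i"
proof -
  obtain m where m: "i = Suc m" using assms by (cases i) auto
  define \<kappa> where "\<kappa> = (\<Sum>l<N. moran_D N r l) / (\<Sum>l<N. (1 / r) ^ l)"
  define d where "d m = \<kappa> * (1 / r) ^ m - moran_D N r m" for m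
  have T_Suc: "moran_T N r (Suc n) = moran_T N r n + d n" for n
    by (simp add: moran_T_def d_def \<kappa>_def)
  have d_Suc: "d i = d m / r - moran_weight N r i"
    unfolding d_def m moran_D_Suc using assms(1) by (simp add: field_simps)
  have "moran_alpha N r i * d i =
      moran_alpha N r i / r * d m - moran_alpha N r i * moran_weight N r i"
    unfolding d_Suc by (simp add: algebra_simps)
  also have "\<dots> = moran_beta N r i * d m - 1"
    using moran_alpha_mult_weight[OF assms] assms(1) by (simp add: moran_alpha_eq_mult_beta)
  finally have "moran_alpha N r i * d i - moran_beta N r i * d m = -1" by simp
  thus ?thesis using T_Suc[of i] T_Suc[of m] unfolding m by (simp add: algebra_simps)
qed

lemma moran_time_eq_moran_T:
  assumes "r > 0" "i \<le> N"
  shows "moran_time N r i = moran_T N r i"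
  using assms by (intro moran_time_eqI moran_T_recurrence) (auto simp: moran_T_N)

lemma moran_alpha_beta_inverse_fitness:
  assumes "r > 0" "0 < j" "j < N"
  shows "moran_alpha N (1 / r) (N - j) = moran_beta N r j"
    and "moran_beta N (1 / r) (N - j) = moran_alpha N r j"
proof -
  define a b where "a = real j" and "b = real (N - j)"
  have pos: "a > 0" "b > 0" "a * r + b > 0" and N: "real N = a + b" and j: "N - (N - j) = j"
    using assms by (auto simp: a_def b_def add_pos_pos)
  thus "moran_alpha N (1 / r) (N - j) = moran_beta N r j"
    and "moran_beta N (1 / r) (N - j) = moran_alpha N r j"
    unfolding moran_alpha_def moran_beta_def j N a_def[symmetric] b_def[symmetric]
    using assms(1) by (simp_all add: field_simps)
qed

lemma moran_time_inverse_fitness: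
  assumes "r > 0" "i \<le> N"
  shows "moran_time N r i = moran_time N (1 / r) (N - i)"
proof -
  have "moran_time N r i = moran_T N (1 / r) (N - i)"
  proof (rule moran_time_eqI[OF assms])
    fix j assume j: "0 < j" "j < N"
    have "N - j + 1 = N - (j - 1)" "N - j - 1 = N - (j + 1)" using j by auto
    thus "moran_T N (1 / r) (N - j) = 1 + moran_alpha N r j * moran_T N (1 / r) (N - (j + 1))
        + moran_beta N r j * moran_T N (1 / r) (N - (j - 1))
        + (1 - moran_alpha N r j - moran_beta N r j) * moran_T N (1 / r) (N - j)"
      using moran_T_recurrence[of "1 / r" "N - j" N] assms(1) j
      by (simp add: moran_alpha_beta_inverse_fitness[OF assms(1) j] algebra_simps)
  qed (use assms(1) in \<open>simp_all add: moran_T_N\<close>)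
  also have "\<dots> = moran_time N (1 / r) (N - i)"
    using assms by (simp add: moran_time_eq_moran_T)
  finally show ?thesis .
qed

definition moran_F :: "nat \<Rightarrow> real \<Rightarrow> nat \<Rightarrow> real" where
  "moran_F N r i = (\<Sum>j\<in>{1..<i}. moran_weight N r j * (1 - (1 / r) ^ (i - j)))"

lemma sum_moran_D: "(1 - 1 / r) * (\<Sum>m<i. moran_D N r m) = moran_F N r i"
proof (induction i)
  case (Suc i)
  have "moran_F N r (Suc i) =
      (\<Sum>j=1..i. moran_weight N r j * (1 - (1 / r) ^ (i - j))
        + (1 - 1 / r) * (moran_weight N r j * (1 / r) ^ (i - j)))"
    unfolding moran_F_def by (intro sum.cong) (auto simp: Suc_diff_le algebra_simps)
  also have "\<dots> = moran_F N r i + (1 - 1 / r) * moran_D N r i"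
    unfolding moran_F_def moran_D_def sum.distrib sum_distrib_left
    by (cases i) (simp_all add: atLeastLessThanSuc_atLeastAtMost)
  finally show ?case using Suc by (simp add: distrib_left)
qed (simp add: moran_F_def)

lemma moran_T_eq_moran_F:
  assumes "r > 0" "r \<noteq> 1"
  shows "(1 - 1 / r) * moran_T N r i =
    moran_F N r N - moran_F N r i + ((1 / r) ^ N - (1 / r) ^ i) / (1 - (1 / r) ^ N) * moran_F N r N"
proof -
  define \<rho> where "\<rho> = 1 / r"
  have \<rho>: "1 - \<rho> \<noteq> 0" using assms(2) by (auto simp: \<rho>_def)
  have geom: "(1 - \<rho>) * (\<Sum>m<n. \<rho> ^ m) = 1 - \<rho> ^ n" for n
    using \<rho> by (simp add: sum_gp_strict)
  have slope: "(\<Sum>l<N. moran_D N r l) / (\<Sum>l<N. \<rho> ^ l) = moran_F N r N / (1 - \<rho> ^ N)"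
    using \<rho> by (simp flip: sum_moran_D geom \<rho>_def)
  have T_eq: "moran_T N r i =
      (\<Sum>l<N. moran_D N r l) / (\<Sum>l<N. \<rho> ^ l) * (\<Sum>m<i. \<rho> ^ m) - (\<Sum>m<i. moran_D N r m)"
    by (simp add: moran_T_def sum_subtractf sum_distrib_left \<rho>_def)
  have "(1 - \<rho>) * moran_T N r i = moran_F N r N / (1 - \<rho> ^ N) * ((1 - \<rho>) * (\<Sum>m<i. \<rho> ^ m))
      - (1 - \<rho>) * (\<Sum>m<i. moran_D N r m)"
    unfolding T_eq slope by (simp only: right_diff_distrib mult.left_commute)
  also have "\<dots> = moran_F N r N / (1 - \<rho> ^ N) * (1 - \<rho> ^ i) - moran_F N r i"
    using sum_moran_D[of r N i] geom[of i] by (simp add: \<rho>_def)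
  finally have T_eq':
    "(1 - \<rho>) * moran_T N r i = moran_F N r N / (1 - \<rho> ^ N) * (1 - \<rho> ^ i) - moran_F N r i" .
  show ?thesis
  proof (cases "N = 0")
    case False
    hence "1 - \<rho> ^ N \<noteq> 0" using power_eq_1_iff[of \<rho> N] assms by (auto simp: \<rho>_def)
    thus ?thesis unfolding \<rho>_def[symmetric] T_eq' by (simp add: field_simps)
  qed (use T_eq' in \<open>simp add: \<rho>_def moran_F_def\<close>)
qed

lemma sum_inverse_eq_harm: "(\<Sum>j\<in>{1..<i}. 1 / real j) = harm (i - 1)"
proof -
  have "{1..<i} = {1..i - 1}" by auto
  thus ?thesis by (simp add: harm_def inverse_eq_divide)
qed

lemma sum_inverse_diff_eq_harm:
  assumes "0 < i" "i \<le> N"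
  shows "(\<Sum>j\<in>{1..<i}. 1 / real (N - j)) = harm (N - 1) - harm (N - i)"
  using assms
proof (induction i)
  case (Suc i)
  show ?case
  proof (cases "i = 0")
    case False
    have "N - i = Suc (N - Suc i)" using Suc by simp
    hence "harm (N - i) = harm (N - Suc i) + 1 / real (N - i)"
      by (simp add: harm_Suc inverse_eq_divide)
    thus ?thesis using Suc False by simp
  qed simp
qed simp

lemma moran_F_eq_harm:
  assumes "0 < i" "i \<le> N"
  shows "moran_F N r i = real N * (harm (N - 1) - harm (N - i)) + real N / r * harm (i - 1)
    - real N * (\<Sum>m\<in>{1..<i}. (1 / r) ^ m / real (N - i + m))
    - real N / r * (\<Sum>m\<in>{1..<i}. (1 / r) ^ m / real (i - m))"
proof -
  have "(\<Sum>j\<in>{1..<i}. moran_weight N r j) =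
      real N * (harm (N - 1) - harm (N - i)) + real N / r * harm (i - 1)"
  proof -
    have "(\<Sum>j\<in>{1..<i}. moran_weight N r j) =
        real N * (\<Sum>j\<in>{1..<i}. 1 / real (N - j)) + real N / r * (\<Sum>j\<in>{1..<i}. 1 / real j)"
      unfolding sum_distrib_left sum.distrib[symmetric]
      by (intro sum.cong) (simp_all add: moran_weight_def)
    thus ?thesis by (simp only: sum_inverse_diff_eq_harm[OF assms] sum_inverse_eq_harm)
  qed
  moreover have "(\<Sum>j\<in>{1..<i}. moran_weight N r j * (1 / r) ^ (i - j)) =
      real N * (\<Sum>m\<in>{1..<i}. (1 / r) ^ m / real (N - i + m))
      + real N / r * (\<Sum>m\<in>{1..<i}. (1 / r) ^ m / real (i - m))"
  proof -
    have "(\<Sum>j\<in>{1..<i}. moran_weight N r j * (1 / r) ^ (i - j)) =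
      (\<Sum>m\<in>{1..<i}. moran_weight N r (i - m) * (1 / r) ^ m)"
    by (rule sum.reindex_bij_witness[of _ "\<lambda>m. i - m" "\<lambda>j. i - j"]) auto
  also have "\<dots> = real N * (\<Sum>m\<in>{1..<i}. (1 / r) ^ m / real (N - i + m))
      + real N / r * (\<Sum>m\<in>{1..<i}. (1 / r) ^ m / real (i - m))"
    unfolding sum_distrib_left sum.distrib[symmetric]
  proof (intro sum.cong refl)
    fix m assume "m \<in> {1..<i}"
    hence "N - (i - m) = N - i + m" using assms by auto
    thus "moran_weight N r (i - m) * (1 / r) ^ m =
        real N * ((1 / r) ^ m / real (N - i + m)) + real N / r * ((1 / r) ^ m / real (i - m))"
      by (simp add: moran_weight_def distrib_right)
  qed
    finally show ?thesis .
  qed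
  ultimately show ?thesis
    by (simp add: moran_F_def right_diff_distrib sum_subtractf)
qed

lemma moran_T_eq_harm:
  assumes "r > 0" "r \<noteq> 1" "0 < i" "i < N"
  defines "\<rho> \<equiv> 1 / r"
  shows "(1 - \<rho>) * moran_T N r i =
      real N * harm (N - i) + \<rho> * real N * (harm N - harm i) + \<rho> * (real N / real i - 1)
    - real N * (\<Sum>m\<in>{1..<N}. \<rho> ^ m / real m) - \<rho> * real N * (\<Sum>m\<in>{1..<N}. \<rho> ^ m / real (N - m))
    + real N * (\<Sum>m\<in>{1..<i}. \<rho> ^ m / real (N - i + m))
    + \<rho> * real N * (\<Sum>m\<in>{1..<i}. \<rho> ^ m / real (i - m))
    + (\<rho> ^ N - \<rho> ^ i) / (1 - \<rho> ^ N) * moran_F N r N"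
proof -
  have harm_pred: "harm (n - 1) = harm n - 1 / real n" if "0 < n" for n :: nat
    using that by (cases n) (simp_all add: harm_Suc inverse_eq_divide)
  have harm_N: "harm (N - 1) = harm N - 1 / real N" and harm_i: "harm (i - 1) = harm i - 1 / real i"
    using harm_pred[of N] harm_pred[of i] assms(3,4) by simp_all
  define E where "E = (\<rho> ^ N - \<rho> ^ i) / (1 - \<rho> ^ N) * moran_F N r N"
  have T: "(1 - \<rho>) * moran_T N r i = moran_F N r N - moran_F N r i + E"
    using moran_T_eq_moran_F[OF assms(1,2), of N i] by (simp add: \<rho>_def E_def)
  have F_N: "moran_F N r N = real N * harm (N - 1) + \<rho> * real N * harm (N - 1)
      - real N * (\<Sum>m\<in>{1..<N}. \<rho> ^ m / real m) - \<rho> * real N * (\<Sum>m\<in>{1..<N}. \<rho> ^ m / real (N - m))"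
    using moran_F_eq_harm[of N N r] assms(3,4) by (simp add: \<rho>_def harm_def[of 0] mult.commute)
  have F_i: "moran_F N r i = real N * (harm (N - 1) - harm (N - i)) + \<rho> * real N * harm (i - 1)
      - real N * (\<Sum>m\<in>{1..<i}. \<rho> ^ m / real (N - i + m))
      - \<rho> * real N * (\<Sum>m\<in>{1..<i}. \<rho> ^ m / real (i - m))"
    using moran_F_eq_harm[of i N r] assms(3,4) by (simp add: \<rho>_def mult.commute)
  show ?thesis
    unfolding E_def[symmetric] unfolding T F_N F_i harm_N harm_i
    using assms(3,4) by (simp add: algebra_simps)
qed

lemma moran_F_abs_le:
  assumes "r \<ge> 1" "i \<le> N"
  shows "\<bar>moran_F N r i\<bar> \<le> 2 * real N ^ 2"
proof -
  have term_bounds: "0 \<le> moran_weight N r j * (1 - (1 / r) ^ (i - j))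
      \<and> moran_weight N r j * (1 - (1 / r) ^ (i - j)) \<le> 2 * real N" if "j \<in> {1..<i}" for j
  proof -
    have le_N: "real N / d \<le> real N" if "1 \<le> d" for d
      using divide_left_mono[of 1 d "real N"] that by simp
    have "real N / real (N - j) \<le> real N" and "real N / (r * real j) \<le> real N"
      using that assms mult_mono[of 1 r 1 "real j"] by (auto intro!: le_N simp: of_nat_diff)
    hence "0 \<le> moran_weight N r j" "moran_weight N r j \<le> 2 * real N"
      using assms(1) by (auto simp: moran_weight_def)
    moreover have "0 \<le> 1 - (1 / r) ^ (i - j)" "1 - (1 / r) ^ (i - j) \<le> 1"
      using assms(1) by (auto simp: power_le_one)
    ultimately show ?thesis
      using mult_left_le[of "1 - (1 / r) ^ (i - j)" "moran_weight N r j"] by auto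
  qed
  have "\<bar>moran_F N r i\<bar> \<le> (\<Sum>j\<in>{1..<i}. 2 * real N)"
    unfolding moran_F_def using term_bounds by (intro order.trans[OF sum_abs] sum_mono) auto
  also have "\<dots> \<le> 2 * real N ^ 2"
    using assms(2) by (simp add: power2_eq_square mult_right_mono)
  finally show ?thesis .
qed

section \<open>Harmonic numbers and geometrically weighted sums\<close>

definition harm_remainder :: "nat \<Rightarrow> real" where
  "harm_remainder n = harm n - (ln (real n) + euler_mascheroni + 1 / (2 * real n))"

lemma harm_remainder_bound:
  assumes "n \<ge> 2"
  shows "\<bar>harm_remainder n\<bar> \<le> 1 / real n ^ 2"
proof -
  obtain m where n: "n = Suc (Suc m)" using assms by (metis add_2_eq_Suc le_Suc_ex)
  have real_n: "real n = real m + 2" and harm_n: "harm n = harm (Suc m) + 1 / real n"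
    unfolding n by (simp_all add: harm_Suc inverse_eq_divide)
  have lower: "euler_mascheroni \<ge> harm (Suc m) - ln (real n) + 1 / (2 * real n)"
    using euler_mascheroni_lower[of m] by (simp add: real_n add_ac)
  have upper: "euler_mascheroni \<le> harm (Suc m) - ln (real n) + 1 / (2 * (real n - 1))"
    using euler_mascheroni_upper[of m] by (simp add: real_n add_ac)
  have "1 / (2 * (real n - 1)) - 1 / (2 * real n) = 1 / (2 * (real n - 1) * real n)"
    using assms by (simp add: divide_simps)
  also have "\<dots> \<le> 1 / real n ^ 2"
    using assms by (intro divide_left_mono mult_pos_pos) (auto simp: power2_eq_square algebra_simps)
  finally show ?thesis
    using lower upper unfolding harm_remainder_def harm_n by (simp add: abs_le_iff)
qed

lemma log_series_remainder_bound:
  fixes \<rho> :: real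
  assumes "0 < \<rho>" "\<rho> < 1"
  shows "\<bar>(\<Sum>m\<in>{1..<n}. \<rho> ^ m / real m) + ln (1 - \<rho>)\<bar> \<le> \<rho> ^ n / (1 - \<rho>)"
proof -
  have series: "(\<lambda>m. \<rho> ^ m / real m) sums (- ln (1 - \<rho>))"
    using sums_minus[OF ln_series'[of "-\<rho>"]] assms by simp
  have "(\<Sum>m<n. \<rho> ^ m / real m) = (\<Sum>m\<in>{1..<n}. \<rho> ^ m / real m)"
    by (rule sum.mono_neutral_right) auto
  with sums_split_initial_segment[OF series, of n] have tail:
    "(\<lambda>m. \<rho> ^ (m + n) / real (m + n)) sums (- ln (1 - \<rho>) - (\<Sum>m\<in>{1..<n}. \<rho> ^ m / real m))"
    by simp
  have geom: "(\<lambda>m. \<rho> ^ n * \<rho> ^ m) sums (\<rho> ^ n / (1 - \<rho>))"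
    using sums_mult[OF geometric_sums, of \<rho> "\<rho> ^ n"] assms by simp
  have "0 \<le> - ln (1 - \<rho>) - (\<Sum>m\<in>{1..<n}. \<rho> ^ m / real m)"
    by (rule sums_le[OF _ sums_zero tail]) (use assms in simp)
  moreover have "- ln (1 - \<rho>) - (\<Sum>m\<in>{1..<n}. \<rho> ^ m / real m) \<le> \<rho> ^ n / (1 - \<rho>)"
  proof (rule sums_le[OF _ tail geom])
    fix m
    have "\<rho> ^ (m + n) / real (m + n) \<le> \<rho> ^ (m + n)"
      using assms by (cases "m + n") (auto simp: divide_le_eq)
    thus "\<rho> ^ (m + n) / real (m + n) \<le> \<rho> ^ n * \<rho> ^ m" by (simp add: power_add mult.commute)
  qed
  ultimately show ?thesis by (simp add: abs_le_iff)
qed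

lemma summable_quadratic_times_geometric:
  fixes \<rho> :: real
  assumes "0 < \<rho>" "\<rho> < 1"
  shows "summable (\<lambda>m. real m * (real m + 1) * \<rho> ^ m)"
proof (rule summable_comparison_test_bigo)
  show "summable (\<lambda>m. norm (inverse (real m ^ 2)))"
    using inverse_power_summable[of 2, where ?'a = real] by simp
  show "(\<lambda>m. real m * (real m + 1) * \<rho> ^ m) \<in> O(\<lambda>m. inverse (real m ^ 2))"
    using assms by real_asymp
qed

lemma sum_geometric_weighted_approx:
  fixes \<rho> a :: real
  assumes "0 < \<rho>" "\<rho> < 1" "a > 0" "K > 0"
    and close: "\<And>m. 0 < m \<Longrightarrow> m < K \<Longrightarrow> \<bar>f m - 1 / a\<bar> \<le> real m * (real m + 1) / a\<^sup>2"
  shows "\<bar>(\<Sum>m\<in>{1..<K}. \<rho> ^ m * f m) - \<rho> / ((1 - \<rho>) * a)\<bar>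
    \<le> (\<Sum>m. real m * (real m + 1) * \<rho> ^ m) / a\<^sup>2 + \<rho> ^ K / ((1 - \<rho>) * a)"
proof -
  have "(\<Sum>m<K. \<rho> ^ m) = 1 + (\<Sum>m\<in>{1..<K}. \<rho> ^ m)"
    using assms(4) by (simp add: sum.atLeast1_atMost_eq lessThan_atLeast0 sum.atLeast_Suc_lessThan)
  hence "(\<Sum>m\<in>{1..<K}. \<rho> ^ m) = (\<rho> - \<rho> ^ K) / (1 - \<rho>)"
    using assms(2) by (simp add: sum_gp_strict field_simps)
  hence "(\<Sum>m\<in>{1..<K}. \<rho> ^ m) / a - \<rho> / ((1 - \<rho>) * a) = - (\<rho> ^ K / ((1 - \<rho>) * a))"
    by (simp add: diff_divide_distrib[symmetric] divide_divide_eq_left)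
  hence split: "(\<Sum>m\<in>{1..<K}. \<rho> ^ m * f m) - \<rho> / ((1 - \<rho>) * a) =
      (\<Sum>m\<in>{1..<K}. \<rho> ^ m * (f m - 1 / a)) - \<rho> ^ K / ((1 - \<rho>) * a)"
    by (simp add: right_diff_distrib sum_subtractf sum_divide_distrib)
  have "\<bar>\<Sum>m\<in>{1..<K}. \<rho> ^ m * (f m - 1 / a)\<bar> \<le> (\<Sum>m\<in>{1..<K}. real m * (real m + 1) * \<rho> ^ m) / a\<^sup>2"
    unfolding sum_divide_distrib
  proof (rule order.trans[OF sum_abs], intro sum_mono)
    fix m assume "m \<in> {1..<K}"
    hence "\<rho> ^ m * \<bar>f m - 1 / a\<bar> \<le> \<rho> ^ m * (real m * (real m + 1) / a\<^sup>2)"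
      using close assms(1) by (intro mult_left_mono) auto
    thus "\<bar>\<rho> ^ m * (f m - 1 / a)\<bar> \<le> real m * (real m + 1) * \<rho> ^ m / a\<^sup>2"
      using assms(1) by (simp add: abs_mult mult_ac)
  qed
  also have "\<dots> \<le> (\<Sum>m. real m * (real m + 1) * \<rho> ^ m) / a\<^sup>2"
    using assms by (intro divide_right_mono sum_le_suminf summable_quadratic_times_geometric) auto
  finally have "\<bar>\<Sum>m\<in>{1..<K}. \<rho> ^ m * (f m - 1 / a)\<bar> \<le> (\<Sum>m. real m * (real m + 1) * \<rho> ^ m) / a\<^sup>2" .
  moreover have "\<rho> ^ K / ((1 - \<rho>) * a) \<ge> 0" using assms by simp
  ultimately show ?thesis unfolding split by linarith
qed

lemma sum_geometric_shifted_approx: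
  fixes \<rho> :: real
  assumes "0 < \<rho>" "\<rho> < 1" "0 < a" "0 < K"
  shows "\<bar>(\<Sum>m\<in>{1..<K}. \<rho> ^ m / real (a + m)) - \<rho> / ((1 - \<rho>) * real a)\<bar>
    \<le> (\<Sum>m. real m * (real m + 1) * \<rho> ^ m) / real a ^ 2 + \<rho> ^ K / ((1 - \<rho>) * real a)"
proof -
  have "\<bar>1 / real (a + m) - 1 / real a\<bar> \<le> real m * (real m + 1) / real a ^ 2" for m
  proof -
    have "\<bar>1 / real (a + m) - 1 / real a\<bar> = real m / (real a * real (a + m))"
      using assms(3) by (simp add: field_simps)
    also have "\<dots> \<le> real m / real a ^ 2"
      using assms(3) by (intro divide_left_mono) (auto simp: power2_eq_square)
    also have "\<dots> \<le> real m * (real m + 1) / real a ^ 2"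
      by (intro divide_right_mono) (auto simp: algebra_simps)
    finally show ?thesis .
  qed
  thus ?thesis using sum_geometric_weighted_approx[of \<rho> "real a" K "\<lambda>m. 1 / real (a + m)"] assms
    by simp
qed

lemma sum_geometric_reflected_approx:
  fixes \<rho> :: real
  assumes "0 < \<rho>" "\<rho> < 1" "0 < b"
  shows "\<bar>(\<Sum>m\<in>{1..<b}. \<rho> ^ m / real (b - m)) - \<rho> / ((1 - \<rho>) * real b)\<bar>
    \<le> (\<Sum>m. real m * (real m + 1) * \<rho> ^ m) / real b ^ 2 + \<rho> ^ b / ((1 - \<rho>) * real b)"
proof -
  have "\<bar>1 / real (b - m) - 1 / real b\<bar> \<le> real m * (real m + 1) / real b ^ 2" if "m < b" for m
  proof -
    have "\<bar>1 / real (b - m) - 1 / real b\<bar> = real m / (real b * real (b - m))"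
      using that by (simp add: field_simps of_nat_diff)
    also have "\<dots> = real m * (real m + 1) / (real b * ((real m + 1) * real (b - m)))"
      by simp
    also have "\<dots> \<le> real m * (real m + 1) / (real b * real b)"
    proof -
      have "0 \<le> real m * (real b - real m - 1)" using that by (intro mult_nonneg_nonneg) auto
      hence "real b \<le> (real m + 1) * real (b - m)"
        using that by (simp add: of_nat_diff algebra_simps)
      thus ?thesis using that by (intro divide_left_mono mult_left_mono mult_pos_pos) auto
    qed
    finally show ?thesis by (simp add: power2_eq_square)
  qed
  thus ?thesis using sum_geometric_weighted_approx[of \<rho> "real b" b "\<lambda>m. 1 / real (b - m)"] assms
    by simp
qed

section \<open>Asymptotics of the absorption time\<close>

definition moran_time_expansion :: "real \<Rightarrow> real \<Rightarrow> real \<Rightarrow> real" where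
  "moran_time_expansion \<rho> x N =
     1 / (1 - \<rho>) * N * ln N
     + 1 / (1 - \<rho>) * N * (euler_mascheroni + ln (1 - \<rho>) + ln (1 - x) - \<rho> * ln x)
     + (1 + \<rho>) / (2 * (1 - \<rho>)\<^sup>2) * (1 / (1 - x) + \<rho> / x - \<rho>)"

(* Each bracket is the remainder of one of the expansions harm_remainder_bound,
   log_series_remainder_bound, sum_geometric_shifted_approx and sum_geometric_reflected_approx;
   the last term is exponentially small in N. *)
lemma moran_T_minus_expansion:
  assumes "r > 1" "0 < i" "i < N"
  defines "\<rho> \<equiv> 1 / r"
  shows "(1 - \<rho>) * (moran_T N r i - moran_time_expansion \<rho> (real i / real N) (real N)) =
      real N * harm_remainder (N - i) + \<rho> * real N * (harm_remainder N - harm_remainder i)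
    - real N * ((\<Sum>m\<in>{1..<N}. \<rho> ^ m / real m) + ln (1 - \<rho>))
    - \<rho> * real N * ((\<Sum>m\<in>{1..<N}. \<rho> ^ m / real (N - m)) - \<rho> / ((1 - \<rho>) * real N))
    + real N * ((\<Sum>m\<in>{1..<i}. \<rho> ^ m / real (N - i + m)) - \<rho> / ((1 - \<rho>) * real (N - i)))
    + \<rho> * real N * ((\<Sum>m\<in>{1..<i}. \<rho> ^ m / real (i - m)) - \<rho> / ((1 - \<rho>) * real i))
    + (\<rho> ^ N - \<rho> ^ i) / (1 - \<rho> ^ N) * moran_F N r N"
proof -
  define x y \<sigma> where "x = real i / real N" and "y = 1 - x" and "\<sigma> = 1 - \<rho>"
  define S1 S2 S3 S4 where "S1 = (\<Sum>m\<in>{1..<N}. \<rho> ^ m / real m)"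
    and "S2 = (\<Sum>m\<in>{1..<N}. \<rho> ^ m / real (N - m))"
    and "S3 = (\<Sum>m\<in>{1..<i}. \<rho> ^ m / real (N - i + m))"
    and "S4 = (\<Sum>m\<in>{1..<i}. \<rho> ^ m / real (i - m))"
  define e where "e = (\<rho> ^ N - \<rho> ^ i) / (1 - \<rho> ^ N) * moran_F N r N"
  have N: "real N > 0" and x: "x > 0" and y: "y > 0" and \<sigma>: "\<sigma> > 0" and \<rho>: "\<rho> = 1 - \<sigma>"
    using assms by (auto simp: x_def y_def \<sigma>_def \<rho>_def)
  have i_eq: "real i = real N * x" and Ni_eq: "real (N - i) = real N * y"
    using N assms(3) by (auto simp: x_def y_def field_simps of_nat_diff)
  have T: "(1 - \<rho>) * moran_T N r i =
      real N * harm (N - i) + \<rho> * real N * (harm N - harm i) + \<rho> * (real N / real i - 1)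
      - real N * S1 - \<rho> * real N * S2 + real N * S3 + \<rho> * real N * S4 + e"
    using moran_T_eq_harm[of r i N] assms(1-3)
    by (simp add: S1_def S2_def S3_def S4_def e_def \<rho>_def)
  have "ln (real N * x) = ln (real N) + ln x" "ln (real N * y) = ln (real N) + ln y"
    using N x y by (simp_all add: ln_mult)
  hence remainders:
    "harm_remainder i = harm i - (ln (real N) + ln x + euler_mascheroni + 1 / (2 * (real N * x)))"
    "harm_remainder (N - i) =
       harm (N - i) - (ln (real N) + ln y + euler_mascheroni + 1 / (2 * (real N * y)))"
    "harm_remainder N = harm N - (ln (real N) + euler_mascheroni + 1 / (2 * real N))"
    unfolding harm_remainder_def i_eq Ni_eq by simp_all
  have expansion: "(1 - \<rho>) * moran_time_expansion \<rho> x (real N) =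
      real N * (ln (real N) + euler_mascheroni + ln (1 - \<rho>) + ln y - \<rho> * ln x)
      + (1 + \<rho>) / (2 * (1 - \<rho>)) * (1 / y + \<rho> / x - \<rho>)"
    using \<sigma> by (simp add: moran_time_expansion_def y_def \<rho> field_simps power2_eq_square)
  \<comment> \<open>With 1 - x and 1 - \<rho> replaced by the atoms y and \<sigma>, field_simps can clear
    all denominators.\<close>
  show ?thesis
    unfolding x_def[symmetric] right_diff_distrib[of "1 - \<rho>"] T expansion remainders
      S1_def[symmetric] S2_def[symmetric] S3_def[symmetric] S4_def[symmetric] e_def[symmetric]
    unfolding i_eq Ni_eq \<rho>
    using N x y \<sigma> by (simp add: field_simps)
qed

lemma bigo_inverse_of_bound:
  fixes f :: "nat \<Rightarrow> real" and \<sigma> C D :: real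
  assumes "0 < \<sigma>" "\<sigma> < 1"
    and "eventually (\<lambda>k. \<bar>f k\<bar> \<le> C / real k + D * real k ^ 2 * \<sigma> ^ k) sequentially"
  shows "f \<in> O(\<lambda>k. 1 / real k)"
proof -
  have "(\<lambda>k. real k ^ 3 * \<sigma> ^ k) \<longlonglongrightarrow> 0" using assms(1,2) by real_asymp
  hence "eventually (\<lambda>k. real k ^ 3 * \<sigma> ^ k < 1) sequentially" by (rule order_tendstoD) simp
  with assms(3) eventually_gt_at_top[of 0]
  have "eventually (\<lambda>k. norm (f k) \<le> (\<bar>C\<bar> + \<bar>D\<bar>) * norm (1 / real k)) sequentially"
  proof eventually_elim
    case (elim k)
    have "D * real k ^ 2 * \<sigma> ^ k \<le> \<bar>D\<bar> * (real k ^ 3 * \<sigma> ^ k) / real k"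
      using elim(2) assms(1) by (simp add: power3_eq_cube power2_eq_square mult_right_mono)
    also have "\<dots> \<le> \<bar>D\<bar> / real k"
      using elim(3) by (intro divide_right_mono mult_left_le) auto
    finally have "D * real k ^ 2 * \<sigma> ^ k \<le> \<bar>D\<bar> / real k" .
    moreover have "C / real k \<le> \<bar>C\<bar> / real k" by (simp add: divide_right_mono)
    ultimately show ?case using elim(1) by (simp add: add_divide_distrib)
  qed
  thus ?thesis by (rule bigoI)
qed

lemma harm_remainder_bigo:
  assumes "0 < b"
  shows "(\<lambda>k. real (k * a) * harm_remainder (k * b)) \<in> O(\<lambda>k. 1 / real k)"
proof (rule bigo_inverse_of_bound[of "1 / 2" _ "real a / real b ^ 2" 0])
  show "eventually (\<lambda>k. \<bar>real (k * a) * harm_remainder (k * b)\<bar>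
      \<le> real a / real b ^ 2 / real k + 0 * real k ^ 2 * (1 / 2) ^ k) sequentially"
    using eventually_ge_at_top[of 2]
  proof eventually_elim
    case (elim k)
    have "k \<le> k * b" using assms by simp
    hence "k * b \<ge> 2" using elim by linarith
    hence "\<bar>real (k * a) * harm_remainder (k * b)\<bar> \<le> real (k * a) * (1 / real (k * b) ^ 2)"
      unfolding abs_mult abs_of_nat by (intro mult_left_mono harm_remainder_bound) auto
    also have "\<dots> = real a / real b ^ 2 / real k"
      using elim by (simp add: field_simps power2_eq_square)
    finally show ?case by simp
  qed
qed simp_all

lemma log_series_remainder_bigo:
  fixes \<rho> :: real
  assumes "0 < \<rho>" "\<rho> < 1" "0 < b"
  shows "(\<lambda>k. real (k * a) * ((\<Sum>m\<in>{1..<k * b}. \<rho> ^ m / real m) + ln (1 - \<rho>))) \<in> O(\<lambda>k. 1 / real k)"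
proof (rule bigo_inverse_of_bound[OF assms(1,2), of _ 0 "real a / (1 - \<rho>)"])
  show "eventually (\<lambda>k. \<bar>real (k * a) * ((\<Sum>m\<in>{1..<k * b}. \<rho> ^ m / real m) + ln (1 - \<rho>))\<bar>
      \<le> 0 / real k + real a / (1 - \<rho>) * real k ^ 2 * \<rho> ^ k) sequentially"
  proof (rule always_eventually, intro allI)
    fix k
    have "\<bar>real (k * a) * ((\<Sum>m\<in>{1..<k * b}. \<rho> ^ m / real m) + ln (1 - \<rho>))\<bar>
        \<le> real (k * a) * (\<rho> ^ (k * b) / (1 - \<rho>))"
      unfolding abs_mult abs_of_nat using assms
      by (intro mult_left_mono log_series_remainder_bound) auto
    also have "\<dots> = real a / (1 - \<rho>) * (real k * \<rho> ^ (k * b))" by simp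
    also have "\<dots> \<le> real a / (1 - \<rho>) * (real k ^ 2 * \<rho> ^ k)"
    proof (intro mult_left_mono mult_mono)
      show "\<rho> ^ (k * b) \<le> \<rho> ^ k" using assms by (intro power_decreasing) auto
      show "real k \<le> real k ^ 2" by (cases k) (auto simp: power2_eq_square)
    qed (use assms in auto)
    finally show "\<bar>real (k * a) * ((\<Sum>m\<in>{1..<k * b}. \<rho> ^ m / real m) + ln (1 - \<rho>))\<bar>
      \<le> 0 / real k + real a / (1 - \<rho>) * real k ^ 2 * \<rho> ^ k" by simp
  qed
qed

lemma geometric_remainder_bigo:
  fixes \<rho> B :: real and E :: "nat \<Rightarrow> real"
  assumes "0 < \<rho>" "\<rho> < 1" "0 < b" "0 < c"
    and bound: "\<And>k. 0 < k \<Longrightarrow> \<bar>E k\<bar> \<le> B / real (k * b) ^ 2 + \<rho> ^ (k * c) / ((1 - \<rho>) * real (k * b))"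
  shows "(\<lambda>k. real (k * a) * E k) \<in> O(\<lambda>k. 1 / real k)"
proof (rule bigo_inverse_of_bound[OF assms(1,2), of _ "real a * B / real b ^ 2"
      "real a / (real b * (1 - \<rho>))"])
  show "eventually (\<lambda>k. \<bar>real (k * a) * E k\<bar>
      \<le> real a * B / real b ^ 2 / real k + real a / (real b * (1 - \<rho>)) * real k ^ 2 * \<rho> ^ k)
      sequentially"
    using eventually_gt_at_top[of 0]
  proof eventually_elim
    case (elim k)
    have "\<bar>real (k * a) * E k\<bar>
        \<le> real (k * a) * (B / real (k * b) ^ 2 + \<rho> ^ (k * c) / ((1 - \<rho>) * real (k * b)))"
      unfolding abs_mult abs_of_nat using bound[OF elim] by (intro mult_left_mono) auto
    also have "\<dots> = real a * B / real b ^ 2 / real k + real a / (real b * (1 - \<rho>)) * \<rho> ^ (k * c)"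
      using elim assms(2,3) by (simp add: field_simps power2_eq_square)
    also have "\<dots> \<le> real a * B / real b ^ 2 / real k
        + real a / (real b * (1 - \<rho>)) * (real k ^ 2 * \<rho> ^ k)"
    proof (intro add_left_mono mult_left_mono)
      have "\<rho> ^ (k * c) \<le> \<rho> ^ k" using assms elim by (intro power_decreasing) auto
      also have "\<dots> \<le> real k ^ 2 * \<rho> ^ k"
        using mult_right_mono[of 1 "real k ^ 2" "\<rho> ^ k"] elim assms(1) by (simp add: one_le_power)
      finally show "\<rho> ^ (k * c) \<le> real k ^ 2 * \<rho> ^ k" .
    qed (use assms in auto)
    finally show ?case by (simp add: mult.assoc)
  qed
qed

lemma moran_boundary_correction_bigo:
  assumes "r > 1" "0 < p" "p \<le> q"
  defines "\<rho> \<equiv> 1 / r"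
  shows "(\<lambda>k. (\<rho> ^ (k * q) - \<rho> ^ (k * p)) / (1 - \<rho> ^ (k * q)) * moran_F (k * q) r (k * q))
    \<in> O(\<lambda>k. 1 / real k)"
proof -
  have \<rho>: "0 < \<rho>" "\<rho> < 1" using assms(1) by (auto simp: \<rho>_def)
  show ?thesis
  proof (rule bigo_inverse_of_bound[OF \<rho>, of _ 0 "2 * real q ^ 2 / (1 - \<rho>)"])
    show "eventually (\<lambda>k. \<bar>(\<rho> ^ (k * q) - \<rho> ^ (k * p)) / (1 - \<rho> ^ (k * q)) * moran_F (k * q) r (k * q)\<bar>
        \<le> 0 / real k + 2 * real q ^ 2 / (1 - \<rho>) * real k ^ 2 * \<rho> ^ k) sequentially"
      using eventually_gt_at_top[of 0]
    proof eventually_elim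
      case (elim k)
      have "k \<le> k * p" "k * p \<le> k * q" "1 \<le> k * q" using elim assms(2,3) by auto
      hence powers: "\<rho> ^ (k * q) \<le> \<rho> ^ (k * p)" "\<rho> ^ (k * p) \<le> \<rho> ^ k" "\<rho> ^ (k * q) \<le> \<rho> ^ 1"
        using \<rho> by (metis less_eq_real_def power_decreasing)+
      have "0 \<le> \<rho> ^ (k * q)" using \<rho> by simp
      hence "\<bar>\<rho> ^ (k * q) - \<rho> ^ (k * p)\<bar> \<le> \<rho> ^ k" using powers(1,2) by linarith
      hence "\<bar>\<rho> ^ (k * q) - \<rho> ^ (k * p)\<bar> / (1 - \<rho> ^ (k * q)) \<le> \<rho> ^ k / (1 - \<rho>)"
        using \<rho> powers(3) by (intro frac_le) auto
      moreover have "\<bar>1 - \<rho> ^ (k * q)\<bar> = 1 - \<rho> ^ (k * q)" using \<rho> powers(3) by simp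
      moreover have "\<bar>moran_F (k * q) r (k * q)\<bar> \<le> 2 * real (k * q) ^ 2"
        using assms(1) by (intro moran_F_abs_le) auto
      ultimately have "\<bar>(\<rho> ^ (k * q) - \<rho> ^ (k * p)) / (1 - \<rho> ^ (k * q)) * moran_F (k * q) r (k * q)\<bar>
          \<le> \<rho> ^ k / (1 - \<rho>) * (2 * real (k * q) ^ 2)"
        unfolding abs_mult abs_divide using \<rho> by (intro mult_mono) auto
      thus ?case by (simp add: power_mult_distrib mult_ac)
    qed
  qed
qed

lemma moran_time_asymp_gt1:
  assumes "r > 1" "0 < p" "p < q"
  shows "(\<lambda>k. moran_time (k * q) r (k * p) - moran_time_expansion (1 / r) (real p / real q) (real (k * q)))
    \<in> O(\<lambda>k. 1 / real k)"
proof -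
  define \<rho> where "\<rho> = 1 / r"
  have \<rho>: "0 < \<rho>" "\<rho> < 1" using assms(1) by (auto simp: \<rho>_def)
  define B where "B = (\<Sum>m. real m * (real m + 1) * \<rho> ^ m)"
  define err where "err k =
      real (k * q) * harm_remainder (k * (q - p))
    + \<rho> * (real (k * q) * harm_remainder (k * q) - real (k * q) * harm_remainder (k * p))
    - real (k * q) * ((\<Sum>m\<in>{1..<k * q}. \<rho> ^ m / real m) + ln (1 - \<rho>))
    - \<rho> * (real (k * q) * ((\<Sum>m\<in>{1..<k * q}. \<rho> ^ m / real (k * q - m)) - \<rho> / ((1 - \<rho>) * real (k * q))))
    + real (k * q) * ((\<Sum>m\<in>{1..<k * p}. \<rho> ^ m / real (k * (q - p) + m)) - \<rho> / ((1 - \<rho>) * real (k * (q - p))))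
    + \<rho> * (real (k * q) * ((\<Sum>m\<in>{1..<k * p}. \<rho> ^ m / real (k * p - m)) - \<rho> / ((1 - \<rho>) * real (k * p))))
    + (\<rho> ^ (k * q) - \<rho> ^ (k * p)) / (1 - \<rho> ^ (k * q)) * moran_F (k * q) r (k * q)" for k
  have "eventually (\<lambda>k. moran_time (k * q) r (k * p) - moran_time_expansion \<rho> (real p / real q) (real (k * q))
      = err k / (1 - \<rho>)) sequentially" (is "eventually (\<lambda>k. ?f k = _) _")
    using eventually_gt_at_top[of 0]
  proof eventually_elim
    case (elim k)
    have "0 < k * p" "k * p < k * q" "k * q - k * p = k * (q - p)"
      and x: "real (k * p) / real (k * q) = real p / real q"
      using elim assms by (auto simp: diff_mult_distrib2)
    hence "(1 - \<rho>) * (moran_T (k * q) r (k * p)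
        - moran_time_expansion \<rho> (real p / real q) (real (k * q))) = err k"
      using moran_T_minus_expansion[OF assms(1), of "k * p" "k * q"]
      unfolding err_def \<rho>_def[symmetric] x by (simp add: algebra_simps)
    thus ?case using \<rho> assms by (simp add: moran_time_eq_moran_T field_simps)
  qed
  hence "?f \<in> O(\<lambda>k. 1 / real k) \<longleftrightarrow> (\<lambda>k. err k / (1 - \<rho>)) \<in> O(\<lambda>k. 1 / real k)"
    by (rule landau_o.big.in_cong)
  moreover have "err \<in> O(\<lambda>k. 1 / real k)"
  proof -
    have "(\<lambda>k. real (k * q) * harm_remainder (k * (q - p))) \<in> O(\<lambda>k. 1 / real k)"
         "(\<lambda>k. real (k * q) * harm_remainder (k * q)) \<in> O(\<lambda>k. 1 / real k)"
         "(\<lambda>k. real (k * q) * harm_remainder (k * p)) \<in> O(\<lambda>k. 1 / real k)"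
      using harm_remainder_bigo[of "q - p" q] harm_remainder_bigo[of q q]
        harm_remainder_bigo[of p q] assms
      by auto
    moreover have "(\<lambda>k. real (k * q) * ((\<Sum>m\<in>{1..<k * q}. \<rho> ^ m / real m) + ln (1 - \<rho>)))
        \<in> O(\<lambda>k. 1 / real k)"
      using assms by (intro log_series_remainder_bigo[OF \<rho>]) auto
    moreover have "(\<lambda>k. real (k * q) * ((\<Sum>m\<in>{1..<k * q}. \<rho> ^ m / real (k * q - m))
        - \<rho> / ((1 - \<rho>) * real (k * q)))) \<in> O(\<lambda>k. 1 / real k)"
      using assms sum_geometric_reflected_approx[OF \<rho>, of "k * q" for k]
      by (intro geometric_remainder_bigo[OF \<rho>, where B = B and b = q and c = q]) (auto simp: B_def)
    moreover have "(\<lambda>k. real (k * q) * ((\<Sum>m\<in>{1..<k * p}. \<rho> ^ m / real (k * (q - p) + m))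
        - \<rho> / ((1 - \<rho>) * real (k * (q - p))))) \<in> O(\<lambda>k. 1 / real k)"
      using assms sum_geometric_shifted_approx[OF \<rho>, of "k * (q - p)" "k * p" for k]
      by (intro geometric_remainder_bigo[OF \<rho>, where B = B and b = "q - p" and c = p])
        (auto simp: B_def)
    moreover have "(\<lambda>k. real (k * q) * ((\<Sum>m\<in>{1..<k * p}. \<rho> ^ m / real (k * p - m))
        - \<rho> / ((1 - \<rho>) * real (k * p)))) \<in> O(\<lambda>k. 1 / real k)"
      using assms sum_geometric_reflected_approx[OF \<rho>, of "k * p" for k]
      by (intro geometric_remainder_bigo[OF \<rho>, where B = B and b = p and c = p]) (auto simp: B_def)
    moreover have "(\<lambda>k. (\<rho> ^ (k * q) - \<rho> ^ (k * p)) / (1 - \<rho> ^ (k * q)) * moran_F (k * q) r (k * q))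
        \<in> O(\<lambda>k. 1 / real k)"
      using assms unfolding \<rho>_def by (intro moran_boundary_correction_bigo) auto
    ultimately show ?thesis
      unfolding err_def[abs_def] using \<rho> by (intro sum_in_bigo) (simp_all add: sum_in_bigo)
  qed
  ultimately show ?thesis
    unfolding \<rho>_def[symmetric] using \<rho> by simp
qed

lemma moran_time_asymp_lt1:
  assumes "0 < r" "r < 1" "0 < p" "p < q"
  shows "(\<lambda>k. moran_time (k * q) r (k * p) - moran_time_expansion r (1 - real p / real q) (real (k * q)))
    \<in> O(\<lambda>k. 1 / real k)"
proof -
  have "moran_time (k * q) r (k * p) = moran_time (k * q) (1 / r) (k * (q - p))" for k
    using moran_time_inverse_fitness[OF assms(1), of "k * p" "k * q"] assms(4)
    by (simp add: diff_mult_distrib2)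
  moreover have "real (q - p) / real q = 1 - real p / real q"
    using assms(4) by (simp add: of_nat_diff field_simps)
  ultimately show ?thesis
    using moran_time_asymp_gt1[of "1 / r" "q - p" q] assms by simp
qed

lemma moran_time_expansion_gt1:
  assumes "r > 1"
  shows "moran_time_expansion (1 / r) x N =
    r / (r - 1) * N * ln N
    + r / (r - 1) * N * (euler_mascheroni + ln (1 - 1 / r) + ln (1 - x) - (1 / r) * ln x)
    + (r + 1) / (2 * (r - 1)\<^sup>2) * (r / (1 - x) + 1 / x - 1)"
proof -
  have "1 + 1 / r = (r + 1) / r" "1 - 1 / r = (r - 1) / r"
    using assms by (simp_all add: field_simps)
  moreover have "(a / r) / (2 * (b / r)\<^sup>2) = r * (a / (2 * b\<^sup>2))" for a b
    using assms by (cases "b = 0") (simp_all add: power_divide field_simps power2_eq_square)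
  moreover have "1 / (1 - x) + 1 / r / x - 1 / r = (r / (1 - x) + 1 / x - 1) / r"
    using assms by (simp add: field_simps)
  ultimately show ?thesis using assms by (simp add: moran_time_expansion_def)
qed

lemma moran_time_expansion_lt1:
  assumes "0 < r" "r < 1"
  shows "moran_time_expansion r (1 - x) N =
    1 / (1 - r) * N * ln N
    + 1 / (1 - r) * N * (euler_mascheroni + ln (1 - r) + ln x - r * ln (1 - x))
    + r * (1 + r) / (2 * (1 - r)\<^sup>2) * (1 / (r * x) + 1 / (1 - x) - 1)"
proof -
  have "1 / x + r / (1 - x) - r = r * (1 / (r * x) + 1 / (1 - x) - 1)"
    using assms by (simp add: field_simps)
  thus ?thesis by (simp add: moran_time_expansion_def)
qed

lemma bigo_inverse_imp_bound_on_multiples: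
  fixes f :: "nat \<Rightarrow> real"
  assumes "f \<in> O(\<lambda>k. 1 / real k)" "0 < q"
  shows "\<exists>C N0. \<forall>k. k * q \<ge> N0 \<longrightarrow> \<bar>f k\<bar> \<le> C / real (k * q)"
proof -
  obtain c where "eventually (\<lambda>k. norm (f k) \<le> c * norm (1 / real k)) sequentially"
    using landau_o.bigE[OF assms(1)] by blast
  then obtain k0 where k0: "\<And>k. k \<ge> k0 \<Longrightarrow> \<bar>f k\<bar> \<le> c / real k"
    by (auto simp: eventually_at_top_linorder)
  have "\<bar>f k\<bar> \<le> c * real q / real (k * q)" if "k * q \<ge> k0 * q" for k
    using k0[of k] that assms(2) by simp
  thus ?thesis by blast
qed

theorem theorem4:
  fixes r :: real and p q :: nat
  assumes "r > 0" and "r \<noteq> 1"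
    and "0 < p" and "p < q" and "coprime p q"
  defines "x \<equiv> real p / real q"
  shows
   "(r > 1 \<longrightarrow>
      (\<exists>C N0. \<forall>k. let N = k * q in N \<ge> N0 \<longrightarrow>
         \<bar>moran_time N r (k * p)
          - (r / (r - 1) * real N * ln (real N)
             + r / (r - 1) * real N * (euler_mascheroni + ln (1 - 1 / r) + ln (1 - x) - (1 / r) * ln x)
             + (r + 1) / (2 * (r - 1)\<^sup>2) * (r / (1 - x) + 1 / x - 1))\<bar> \<le> C / real N))
    \<and> (r < 1 \<longrightarrow>
      (\<exists>C N0. \<forall>k. let N = k * q in N \<ge> N0 \<longrightarrow>
         \<bar>moran_time N r (k * p)
          - (1 / (1 - r) * real N * ln (real N)
             + 1 / (1 - r) * real N * (euler_mascheroni + ln (1 - r) + ln x - r * ln (1 - x))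
             + r * (1 + r) / (2 * (1 - r)\<^sup>2) * (1 / (r * x) + 1 / (1 - x) - 1))\<bar> \<le> C / real N))"
proof (intro conjI impI)
  have q: "0 < q" and x: "x = real p / real q" using assms by (simp_all add: x_def)
  show "\<exists>C N0. \<forall>k. let N = k * q in N \<ge> N0 \<longrightarrow>
      \<bar>moran_time N r (k * p) - (r / (r - 1) * real N * ln (real N)
        + r / (r - 1) * real N * (euler_mascheroni + ln (1 - 1 / r) + ln (1 - x) - (1 / r) * ln x)
        + (r + 1) / (2 * (r - 1)\<^sup>2) * (r / (1 - x) + 1 / x - 1))\<bar> \<le> C / real N" if "r > 1"
    using bigo_inverse_imp_bound_on_multiples[OF moran_time_asymp_gt1[OF that assms(3,4)] q]
    unfolding Let_def x moran_time_expansion_gt1[OF that] .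
  show "\<exists>C N0. \<forall>k. let N = k * q in N \<ge> N0 \<longrightarrow>
      \<bar>moran_time N r (k * p) - (1 / (1 - r) * real N * ln (real N)
        + 1 / (1 - r) * real N * (euler_mascheroni + ln (1 - r) + ln x - r * ln (1 - x))
        + r * (1 + r) / (2 * (1 - r)\<^sup>2) * (1 / (r * x) + 1 / (1 - x) - 1))\<bar> \<le> C / real N" if "r < 1"
    using bigo_inverse_imp_bound_on_multiples[OF moran_time_asymp_lt1[OF assms(1) that assms(3,4)] q]
    unfolding Let_def x moran_time_expansion_lt1[OF assms(1) that] .
qed

end
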